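(* Let $mG$ be a finite canonical misinformation game, $\Gamma=(\mathcal{AD}^*(\{mG\}),E)$ its adaptation graph, and $\Gamma'$ its loopless version. Then $\Gamma'$ is a directed acyclic graph.
   Context: A normal-form game is $G=\langle N,S,P\rangle$ with finite players $N$, finite pure strategy sets $S_i$, positions $S=\times_i S_i$, payoffs $P_i:S\to\mathbb{R}$. A misinformation game $mG=\langle G^0,G^1,\dots,G^{|N|}\rangle$ consists of the actual game $G^0$ and subjective games $G^i$; it is canonical if all $G^i=\langle N,S,P^i\rangle$ differ from $G^0$ only in payoffs and in every $G^i$ all players have equally many pure strategies. $NME(mG)$ is the set of profiles $\sigma=(\sigma_1,\dots,\sigma_{|N|})$ such that each $\sigma_i$ is player $i$'s component of some Nash equilibrium of $G^i$. $\chi(\sigma)=\mathrm{supp}(\sigma_1)\times\dots\times\mathrm{supp}(\sigma_{|N|})$. For $\vec v\in S$, $mG_{\vec v}$ is obtained by replacing, in every $P^i$ ($i\ge1$), the payoff vector at position $\vec v$ by $P^0(\vec v)$. For a set $M$ of misinformation games, $\mathcal{AD}(M)=\{mG_{\vec u}: mG\in M,\sigma\in NME(mG),\vec u\in\chi(\sigma)\}$, $\mathcal{AD}^{(0)}(M)=M$, $\mathcal{AD}^{(t+1)}(M)=\mathcal{AD}^{(t)}(\mathcal{AD}(M))$, $\mathcal{AD}^*(M)=\bigcup_{t\ge0}\mathcal{AD}^{(t)}(M)$. The adaptation graph $\Gamma$ is the directed graph with vertex set $\mathcal{AD}^*(\{mG\})$ and an edge $(mG^1,mG^2)$ iff $mG^2=(mG^1)_{\vec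 v}$ for some $\sigma\in NME(mG^1)$ and $\vec v\in\chi(\sigma)$. Its loopless version $\Gamma'$ has the same vertices and the edges of $\Gamma$ with $mG^1\neq mG^2$. *)

theory Defs
  imports Complex_Main
begin

text \<open>A canonical misinformation game with n players (players 0..<n),
each having the pure strategies {0..<m} in every game. A payoff function
P :: nat => (nat => nat) => real gives P i s, the payoff of player i at position s.
A misinformation game is a map g :: nat => payoff, where g 0 is the actual game
and g (Suc i) is the subjective game of player i (i < n).\<close>

type_synonym payoff = "nat \<Rightarrow> (nat \<Rightarrow> nat) \<Rightarrow> real"
type_synonym mgame = "nat \<Rightarrow> payoff"
type_synonym profile = "nat \<Rightarrow> nat \<Rightarrow> real"

definition positions :: "nat \<Rightarrow> nat \<Rightarrow> (nat \<Rightarrow> nat) set" where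
  "positions n m = {s. (\<forall>i<n. s i < m) \<and> (\<forall>i\<ge>n. s i = 0)}"

definition mixed_strategy :: "nat \<Rightarrow> (nat \<Rightarrow> real) \<Rightarrow> bool" where
  "mixed_strategy m p \<longleftrightarrow> (\<forall>a. 0 \<le> p a) \<and> (\<forall>a\<ge>m. p a = 0) \<and> (\<Sum>a<m. p a) = 1"

definition mixed_profile :: "nat \<Rightarrow> nat \<Rightarrow> profile \<Rightarrow> bool" where
  "mixed_profile n m \<sigma> \<longleftrightarrow> (\<forall>i<n. mixed_strategy m (\<sigma> i)) \<and> (\<forall>i\<ge>n. \<sigma> i = (\<lambda>_. 0))"

definition exp_payoff :: "nat \<Rightarrow> nat \<Rightarrow> payoff \<Rightarrow> nat \<Rightarrow> profile \<Rightarrow> real" where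
  "exp_payoff n m P i \<sigma> = (\<Sum>s\<in>positions n m. (\<Prod>j<n. \<sigma> j (s j)) * P i s)"

definition nash :: "nat \<Rightarrow> nat \<Rightarrow> payoff \<Rightarrow> profile \<Rightarrow> bool" where
  "nash n m P \<sigma> \<longleftrightarrow> mixed_profile n m \<sigma> \<and>
     (\<forall>i<n. \<forall>\<tau>. mixed_strategy m \<tau> \<longrightarrow> exp_payoff n m P i (\<sigma>(i := \<tau>)) \<le> exp_payoff n m P i \<sigma>)"

definition NME :: "nat \<Rightarrow> nat \<Rightarrow> mgame \<Rightarrow> profile set" where
  "NME n m g = {\<sigma>. (\<forall>i<n. \<exists>\<tau>. nash n m (g (Suc i)) \<tau> \<and> \<sigma> i = \<tau> i) \<and> (\<forall>i\<ge>n. \<sigma> i = (\<lambda>_. 0))}"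

definition chi :: "nat \<Rightarrow> nat \<Rightarrow> profile \<Rightarrow> (nat \<Rightarrow> nat) set" where
  "chi n m \<sigma> = {s \<in> positions n m. \<forall>i<n. 0 < \<sigma> i (s i)}"

text \<open>mG_v: in every subjective game, the payoff vector at position v is replaced
by the actual payoff vector at v.\<close>
definition adapt_at :: "nat \<Rightarrow> mgame \<Rightarrow> (nat \<Rightarrow> nat) \<Rightarrow> mgame" where
  "adapt_at n g v = (\<lambda>k. if 1 \<le> k \<and> k \<le> n
      then (\<lambda>j w. if j < n \<and> w = v then g 0 j w else g k j w) else g k)"

definition adapt_step :: "nat \<Rightarrow> nat \<Rightarrow> mgame \<Rightarrow> mgame \<Rightarrow> bool" where
  "adapt_step n m g h \<longleftrightarrow> (\<exists>\<sigma>\<in>NME n m g. \<exists>v\<in>chi n m \<sigma>. h = adapt_at n g v)"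

definition AD_star :: "nat \<Rightarrow> nat \<Rightarrow> mgame \<Rightarrow> mgame set" where
  "AD_star n m g = {h. (adapt_step n m)\<^sup>*\<^sup>* g h}"

definition adapt_graph_edges :: "nat \<Rightarrow> nat \<Rightarrow> mgame \<Rightarrow> (mgame \<times> mgame) set" where
  "adapt_graph_edges n m g =
     {(a, b). a \<in> AD_star n m g \<and> b \<in> AD_star n m g \<and> adapt_step n m a b}"

definition loopless_edges :: "nat \<Rightarrow> nat \<Rightarrow> mgame \<Rightarrow> (mgame \<times> mgame) set" where
  "loopless_edges n m g = {(a, b) \<in> adapt_graph_edges n m g. a \<noteq> b}"

end

theory Submission
  imports Defs
begin

text \<open>Adapting at a position v makes every subjective game agree with the actual game at v
and changes nothing elsewhere. Hence the finite set of positions at which some subjective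
payoff differs from the actual one never grows along an edge of the adaptation graph, and it
loses v whenever the edge is not a loop. This set is a strictly decreasing measure along the
edges of the loopless graph, which therefore has no cycle. Neither the equilibrium condition
nor the hypotheses 0 < n, 0 < m play any role.\<close>

definition disagreements :: "nat \<Rightarrow> nat \<Rightarrow> mgame \<Rightarrow> (nat \<Rightarrow> nat) set" where
  "disagreements n m g =
     {v \<in> positions n m. \<exists>k j. 1 \<le> k \<and> k \<le> n \<and> j < n \<and> g k j v \<noteq> g 0 j v}"

lemma finite_positions: "finite (positions n m)"
proof -
  have "positions n m =
      {f. \<forall>x. (x \<in> {..<n} \<longrightarrow> f x \<in> {..<m}) \<and> (x \<notin> {..<n} \<longrightarrow> f x = 0)}"
    unfolding positions_def by auto
  then show ?thesis
    using finite_set_of_finite_funs[of "{..<n}" "{..<m}" 0] by simp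
qed

lemma finite_disagreements: "finite (disagreements n m g)"
  unfolding disagreements_def using finite_positions by simp

lemma adapt_at_actual [simp]: "adapt_at n g v 0 = g 0"
  unfolding adapt_at_def by simp

lemma adapt_at_subjective:
  "1 \<le> k \<Longrightarrow> k \<le> n \<Longrightarrow>
     adapt_at n g v k j w = (if j < n \<and> w = v then g 0 j w else g k j w)"
  unfolding adapt_at_def by simp

lemma adapt_at_other: "\<not> (1 \<le> k \<and> k \<le> n) \<Longrightarrow> adapt_at n g v k = g k"
  unfolding adapt_at_def by auto

lemma disagreements_adapt_at_subset:
  "disagreements n m (adapt_at n g v) \<subseteq> disagreements n m g - {v}"
  unfolding disagreements_def by (auto simp: adapt_at_subjective split: if_splits) blast

lemma adapt_at_changed_imp_disagreement:
  assumes "v \<in> positions n m" and "adapt_at n g v \<noteq> g"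
  shows "v \<in> disagreements n m g"
proof -
  obtain k j w where changed: "adapt_at n g v k j w \<noteq> g k j w"
    using assms(2) by (meson ext)
  then have k: "1 \<le> k \<and> k \<le> n"
    using adapt_at_other by metis
  with changed have "j < n" "g k j v \<noteq> g 0 j v"
    by (auto simp: adapt_at_subjective split: if_splits)
  with k assms(1) show ?thesis
    unfolding disagreements_def by blast
qed

lemma disagreements_adapt_at_psubset:
  assumes "v \<in> positions n m" and "adapt_at n g v \<noteq> g"
  shows "disagreements n m (adapt_at n g v) \<subset> disagreements n m g"
  using disagreements_adapt_at_subset adapt_at_changed_imp_disagreement[OF assms] by blast

lemma acyclic_if_finite_psubset_decreasing:
  assumes "\<And>a b. (a, b) \<in> R \<Longrightarrow> finite (f a) \<and> f b \<subset> f a"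
  shows "acyclic R"
proof -
  have "R\<inverse> \<subseteq> inv_image finite_psubset f"
    using assms unfolding finite_psubset_def by auto
  then have "wf (R\<inverse>)"
    using wf_subset wf_inv_image wf_finite_psubset by blast
  then show ?thesis
    using wf_acyclic acyclic_converse by blast
qed

lemma acyclic_nontrivial_adapt_step:
  "acyclic {(a, b). adapt_step n m a b \<and> a \<noteq> b}"
proof (rule acyclic_if_finite_psubset_decreasing[where f = "disagreements n m"])
  fix a b assume "(a, b) \<in> {(a, b). adapt_step n m a b \<and> a \<noteq> b}"
  then obtain \<sigma> v where "v \<in> chi n m \<sigma>" "b = adapt_at n a v" "a \<noteq> b"
    unfolding adapt_step_def by auto
  then show "finite (disagreements n m a) \<and> disagreements n m b \<subset> disagreements n m a"
    using disagreements_adapt_at_psubset finite_disagreements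
    unfolding chi_def by auto
qed

theorem proposition17:
  fixes n m :: nat and g :: mgame
  assumes "0 < n" and "0 < m"
  shows "acyclic (loopless_edges n m g)"
proof (rule acyclic_subset[OF acyclic_nontrivial_adapt_step])
  show "loopless_edges n m g \<subseteq> {(a, b). adapt_step n m a b \<and> a \<noteq> b}"
    unfolding loopless_edges_def adapt_graph_edges_def by auto
qed

end
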